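(* For $m,n\in\mathbb N$ let $(i(m,n),\tau(m,n))\in\mathbb Z^2$, let $v(n)\ge1$, and let $s(n)$ be positive integers with $s(n)\to\infty$. Let $\alpha,\gamma,c>0$ and assume $\sum_{n=1}^\infty v(n)s(n)^\alpha\exp\{-c\,s(n)^\gamma\}<\infty$. Then for $\mathbb P$-almost every $\omega$, \[ \lim_{n\to\infty}\max_{1\le m\le v(n)}s(n)^\alpha\,P^\omega\Bigl\{\max_{1\le k\le s(n)}\tilde X^{i(m,n),\tau(m,n)}_k\ge c\,s(n)^{\frac12+\gamma}\Bigr\}=0, \] where $\tilde X^{i,\tau}_k=X^{i,\tau}_k-i-Vk$.
   Context: Environment setup: Fix an integer $M\ge1$. $\mathcal P$ = probability vectors $u=(u(y):-M\le y\le M)$, with $u(y)=0$ for $|y|>M$. Environment $\omega=(\omega_{x,\tau})\in\Omega=\mathcal P^{\mathbb Z^2}$, $u^\omega_\tau(x,y)=\omega_{x,\tau}(y)$; under $\mathbb P$ the $\omega_{x,\tau}$ are i.i.d. $p(0,j)=\mathbb Eu_0(0,j)$, $V=\sum_jjp(0,j)$. Backward walk: given $\omega$ and $(i,\tau)\in\mathbb Z^2$, $(X^{i,\tau}_s)_{s\ge0}$ is the Markov chain on $\mathbb Z$ under the quenched law $P^\omega$ with $X^{i,\tau}_0=i$ and $P^\omega(X^{i,\tau}_{s+1}=y\mid X^{i,\tau}_s=x)=u^\omega_{\tau-s}(x,y-x)$ (so steps have absolute value at most $M$). *)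

theory Defs
  imports "HOL-Probability.Probability"
begin

definition Pvec :: "nat \<Rightarrow> (int \<Rightarrow> real) set" where
  "Pvec M = {u. (\<forall>y. 0 \<le> u y) \<and> (\<forall>y. \<bar>y\<bar> > int M \<longrightarrow> u y = 0)
               \<and> (\<Sum>y\<in>{- int M..int M}. u y) = 1}"

definition vec_space :: "(int \<Rightarrow> real) measure" where
  "vec_space = PiM UNIV (\<lambda>_. borel)"

text \<open>The environment law P: i.i.d. product of the one-site law mu over Z^2.
  An environment omega maps (x,tau) to omega_{x,tau}, a vector indexed by y.\<close>
definition env_measure :: "(int \<Rightarrow> real) measure \<Rightarrow> (int \<times> int \<Rightarrow> int \<Rightarrow> real) measure" where
  "env_measure \<mu> = PiM UNIV (\<lambda>_. \<mu>)"

definition drift :: "nat \<Rightarrow> (int \<Rightarrow> real) measure \<Rightarrow> real" where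
  "drift M \<mu> = (\<Sum>j\<in>{- int M..int M}. real_of_int j * (\<integral>u. u j \<partial>\<mu>))"

definition walk_pos :: "int \<Rightarrow> int list \<Rightarrow> nat \<Rightarrow> int" where
  "walk_pos i ds k = i + sum_list (take k ds)"

text \<open>Finite-dimensional law of the
  Markov chain with transitions P(X_{s+1}=y | X_s=x) = omega_{x,tau-s}(y-x);
  steps range over [-M,M].\<close>
definition quenched_prob ::
  "nat \<Rightarrow> (int \<times> int \<Rightarrow> int \<Rightarrow> real) \<Rightarrow> int \<Rightarrow> int \<Rightarrow> nat \<Rightarrow> ((nat \<Rightarrow> int) \<Rightarrow> bool) \<Rightarrow> real" where
  "quenched_prob M \<omega> i \<tau> n E =
     (\<Sum>ds\<in>{ds. length ds = n \<and> set ds \<subseteq> {- int M..int M}}.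
        if E (walk_pos i ds)
        then (\<Prod>k<n. \<omega> (walk_pos i ds k, \<tau> - int k) (ds ! k)) else 0)"

end

theory Submission
  imports Defs "HOL-Real_Asymp.Real_Asymp"
begin

text \<open>Write S_k for the displacement X_k - i - V k. By Markov's inequality with the weight
  sum_(k<=s) exp (theta (S_k - a)), where theta = 2 / sqrt s and a = c s^(1/2+gamma), the quenched
  tail probability is dominated by a quenched exponential moment. Its average over the
  environment is the annealed moment: a path visits each time level once, so the environment
  factors along it are independent and average to the kernel p, under which the walk has
  i.i.d. steps of mean V bounded by M. The bound exp x <= 1 + x + x^2 gives the annealed
  moment at most s exp (16 M^2 - 2 c s^gamma), which after multiplication by v s^alpha is
  summable in n. Hence the sum over n and m of the dominating variables has finite
  expectation, is finite almost surely, and its terms tend to zero.\<close>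

lemma nn_integral_PiM_prod_inj_coordinates:
  fixes f :: "'k \<Rightarrow> 'b \<Rightarrow> ennreal" and \<sigma> :: "'k \<Rightarrow> 'i"
  assumes "prob_space \<mu>" and "finite K" and inj: "inj_on \<sigma> K"
    and f: "\<And>k. k \<in> K \<Longrightarrow> f k \<in> borel_measurable \<mu>"
  shows "(\<integral>\<^sup>+\<omega>. (\<Prod>k\<in>K. f k (\<omega> (\<sigma> k))) \<partial>PiM UNIV (\<lambda>_. \<mu>)) = (\<Prod>k\<in>K. \<integral>\<^sup>+u. f k u \<partial>\<mu>)"
proof -
  interpret product_prob_space "\<lambda>_. \<mu>" UNIV
    unfolding product_prob_space_def product_prob_space_axioms_def product_sigma_finite_def
    using assms(1) prob_space_imp_sigma_finite by blast
  define J where "J = \<sigma> ` K"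
  define g where "g z = f (the_inv_into K \<sigma> z)" for z
  have "finite J" using assms(2) J_def by auto
  have g: "g z \<in> borel_measurable \<mu>" if "z \<in> J" for z
    unfolding g_def by (rule f, rule the_inv_into_into[OF inj]) (use that in \<open>auto simp: J_def\<close>)
  have reindex: "(\<Prod>k\<in>K. h k (\<sigma> k)) = (\<Prod>z\<in>J. h (the_inv_into K \<sigma> z) z)" for h :: "'k \<Rightarrow> 'i \<Rightarrow> ennreal"
    unfolding J_def by (subst prod.reindex[OF inj]) (auto simp: the_inv_into_f_f[OF inj])
  have "(\<integral>\<^sup>+\<omega>. (\<Prod>k\<in>K. f k (\<omega> (\<sigma> k))) \<partial>PiM UNIV (\<lambda>_. \<mu>))
      = (\<integral>\<^sup>+\<omega>. (\<Prod>z\<in>J. g z (restrict \<omega> J z)) \<partial>PiM UNIV (\<lambda>_. \<mu>))"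
    by (subst reindex[of "\<lambda>k z. f k (_ z)"]) (auto simp: g_def intro!: nn_integral_cong prod.cong)
  also have "\<dots> = (\<integral>\<^sup>+x. (\<Prod>z\<in>J. g z (x z)) \<partial>distr (PiM UNIV (\<lambda>_. \<mu>)) (PiM J (\<lambda>_. \<mu>)) (\<lambda>\<omega>. restrict \<omega> J))"
    by (subst nn_integral_distr)
       (auto intro!: measurable_restrict_subset borel_measurable_prod_ennreal
          measurable_compose[OF measurable_component_singleton[where M="\<lambda>_. \<mu>"] g])
  also have "\<dots> = (\<integral>\<^sup>+x. (\<Prod>z\<in>J. g z (x z)) \<partial>PiM J (\<lambda>_. \<mu>))"
    by (subst distr_PiM_restrict_finite) (auto simp: \<open>finite J\<close>)
  also have "\<dots> = (\<Prod>z\<in>J. \<integral>\<^sup>+u. g z u \<partial>\<mu>)"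
    by (rule product_nn_integral_prod) (auto simp: \<open>finite J\<close> g)
  also have "\<dots> = (\<Prod>k\<in>K. \<integral>\<^sup>+u. f k u \<partial>\<mu>)"
    using reindex[of "\<lambda>k z. \<integral>\<^sup>+u. f k u \<partial>\<mu>"] by (simp add: g_def)
  finally show ?thesis .
qed

lemma AE_Max_tendsto_zero_if_summable_nn_integral:
  fixes F G :: "nat \<Rightarrow> 'i \<Rightarrow> 'a \<Rightarrow> real"
  assumes A: "\<And>n. finite (A n)" "\<And>n. A n \<noteq> {}"
    and G_meas: "\<And>n m. G n m \<in> borel_measurable M"
    and dom: "AE x in M. \<forall>n m. 0 \<le> F n m x \<and> F n m x \<le> G n m x"
    and G_int: "\<And>n m. (\<integral>\<^sup>+x. G n m x \<partial>M) \<le> ennreal (b n m)"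
    and b_nonneg: "\<And>n m. 0 \<le> b n m"
    and b_summable: "summable (\<lambda>n. \<Sum>m\<in>A n. b n m)"
  shows "AE x in M. (\<lambda>n. Max ((\<lambda>m. F n m x) ` A n)) \<longlonglongrightarrow> 0"
proof -
  define Y where "Y n x = (\<Sum>m\<in>A n. ennreal (G n m x))" for n x
  have Y_meas: "(\<lambda>x. \<Sum>n. Y n x) \<in> borel_measurable M"
    unfolding Y_def using G_meas by measurable
  have "(\<integral>\<^sup>+x. (\<Sum>n. Y n x) \<partial>M) = (\<Sum>n. \<Sum>m\<in>A n. \<integral>\<^sup>+x. G n m x \<partial>M)"
    unfolding Y_def using G_meas by (simp add: nn_integral_suminf nn_integral_sum)
  also have "\<dots> \<le> (\<Sum>n. \<Sum>m\<in>A n. ennreal (b n m))"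
    by (intro suminf_le summableI sum_mono G_int)
  also have "\<dots> = (\<Sum>n. ennreal (\<Sum>m\<in>A n. b n m))"
    by (simp add: sum_ennreal b_nonneg)
  also have "\<dots> < \<infinity>"
    using b_summable b_nonneg by (simp add: suminf_ennreal2 sum_nonneg)
  finally have "AE x in M. (\<Sum>n. Y n x) \<noteq> \<infinity>"
    by (intro nn_integral_PInf_AE Y_meas) simp
  with dom show ?thesis
  proof eventually_elim
    case (elim x)
    let ?S = "\<lambda>n. \<Sum>m\<in>A n. G n m x"
    have S_nonneg: "0 \<le> ?S n" for n
      using elim(1) by (auto intro: sum_nonneg order_trans)
    have "Y n x = ennreal (?S n)" for n
      using elim(1) unfolding Y_def by (subst sum_ennreal) (auto intro: order_trans)
    with elim(2) have "summable ?S"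
      by (intro summable_suminf_not_top S_nonneg) simp
    then have S_lim: "?S \<longlonglongrightarrow> 0" by (rule summable_LIMSEQ_zero)
    show ?case
    proof (rule tendsto_sandwich[OF _ _ tendsto_const S_lim]; intro always_eventually allI)
      fix n
      obtain m where "m \<in> A n" using A(2) by blast
      then have "F n m x \<le> Max ((\<lambda>m. F n m x) ` A n)" using A(1) by simp
      then show "0 \<le> Max ((\<lambda>m. F n m x) ` A n)" using elim(1) order_trans by blast
      have "F n m x \<le> ?S n" if "m \<in> A n" for m
      proof -
        have "F n m x \<le> G n m x" using elim(1) by blast
        also have "\<dots> \<le> ?S n"
          using that A(1) elim(1) by (intro member_le_sum) (auto intro: order_trans)
        finally show ?thesis .
      qed
      then show "Max ((\<lambda>m. F n m x) ` A n) \<le> ?S n"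
        using A by simp
    qed
  qed
qed

lemma lim_mult_exp_neg_powr:
  fixes c \<gamma> :: real
  assumes "0 < c" and "0 < \<gamma>"
  shows "((\<lambda>x. x * exp (- c * x powr \<gamma>)) \<longlongrightarrow> 0) at_top"
  using assms by real_asymp

lemma summable_if_eventually_le_stretched_exp:
  fixes s :: "nat \<Rightarrow> nat" and w \<beta> :: "nat \<Rightarrow> real"
  assumes s: "filterlim s at_top sequentially" and "0 < c" and "0 < \<gamma>"
    and summable: "summable (\<lambda>n. w n * exp (- c * real (s n) powr \<gamma>))"
    and "\<And>n. 0 \<le> w n" and "\<And>n. 0 \<le> \<beta> n"
    and bound: "eventually (\<lambda>n. \<beta> n \<le> w n * (real (s n) * exp (K - 2 * c * real (s n) powr \<gamma>))) sequentially"
  shows "summable \<beta>"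
proof (rule summable_comparison_test_ev)
  have "((\<lambda>n. real (s n) * exp (- c * real (s n) powr \<gamma>)) \<longlongrightarrow> 0) sequentially"
    using lim_mult_exp_neg_powr[OF \<open>0 < c\<close> \<open>0 < \<gamma>\<close>] filterlim_real_sequentially s
    by (rule filterlim_compose[OF _ filterlim_compose])
  then have "eventually (\<lambda>n. real (s n) * exp (- c * real (s n) powr \<gamma>) < 1) sequentially"
    by (rule order_tendstoD(2)) simp
  with bound show "eventually (\<lambda>n. norm (\<beta> n) \<le> exp K * (w n * exp (- c * real (s n) powr \<gamma>))) sequentially"
  proof eventually_elim
    case (elim n)
    let ?e = "exp (- c * real (s n) powr \<gamma>)"
    have "exp (K - 2 * c * real (s n) powr \<gamma>) = exp K * ?e * ?e"
      by (simp flip: exp_add)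
    then have "w n * (real (s n) * exp (K - 2 * c * real (s n) powr \<gamma>)) = exp K * w n * ?e * (real (s n) * ?e)"
      by (simp add: algebra_simps)
    also have "\<dots> \<le> exp K * w n * ?e"
      using elim(2) \<open>0 \<le> w n\<close> by (intro mult_right_le_one_le) auto
    finally show ?case using elim(1) \<open>0 \<le> \<beta> n\<close> by (simp add: algebra_simps)
  qed
  show "summable (\<lambda>n. exp K * (w n * exp (- c * real (s n) powr \<gamma>)))"
    by (rule summable_mult[OF summable])
qed

lemma exp_le_one_plus_self_plus_square:
  fixes x :: real
  assumes "x \<le> 1"
  shows "exp x \<le> 1 + x + x\<^sup>2"
proof (cases "0 \<le> x")
  case True
  then show ?thesis using exp_bound assms by blast
next
  case False
  have "exp x * (1 - x) \<le> exp x * exp (- x)"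
    using exp_ge_add_one_self[of "- x"] by (intro mult_left_mono) auto
  also have "\<dots> = 1" by (simp add: exp_minus)
  also have "\<dots> \<le> (1 + x + x\<^sup>2) * (1 - x)"
    using False mult_nonpos_nonneg[of x "x * x"] by (simp add: algebra_simps power2_eq_square)
  finally show ?thesis using False by simp
qed

lemma lists_length_Suc_eq_image_Cons:
  "{ds. length ds = Suc n \<and> set ds \<subseteq> D} = (\<lambda>(d, ds). d # ds) ` (D \<times> {ds. length ds = n \<and> set ds \<subseteq> D})"
  by (auto simp: length_Suc_conv)

lemma sum_lists_length_prod_nth:
  fixes g :: "nat \<Rightarrow> 'a \<Rightarrow> 'b::comm_semiring_1"
  shows "(\<Sum>ds\<in>{ds. length ds = n \<and> set ds \<subseteq> D}. \<Prod>j<n. g j (ds ! j)) = (\<Prod>j<n. \<Sum>d\<in>D. g j d)"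
proof (induction n arbitrary: g)
  case 0
  have "{ds. length ds = 0 \<and> set ds \<subseteq> D} = {[]}" by auto
  then show ?case by simp
next
  case (Suc n)
  let ?L = "{ds. length ds = n \<and> set ds \<subseteq> D}"
  have "inj_on (\<lambda>(d, ds). d # ds) (D \<times> ?L)" by (auto simp: inj_on_def)
  then have "(\<Sum>ds\<in>{ds. length ds = Suc n \<and> set ds \<subseteq> D}. \<Prod>j<Suc n. g j (ds ! j))
      = (\<Sum>(d, ds)\<in>D \<times> ?L. \<Prod>j<Suc n. g j ((d # ds) ! j))"
    unfolding lists_length_Suc_eq_image_Cons by (subst sum.reindex) (simp_all add: case_prod_beta)
  also have "\<dots> = (\<Sum>d\<in>D. g 0 d) * (\<Sum>ds\<in>?L. \<Prod>j<n. g (Suc j) (ds ! j))"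
    by (simp add: sum.cartesian_product[symmetric] sum_product prod.lessThan_Suc_shift del: prod.lessThan_Suc)
  also have "\<dots> = (\<Prod>j<Suc n. \<Sum>d\<in>D. g j d)"
    by (simp add: Suc.IH[of "\<lambda>j. g (Suc j)"] prod.lessThan_Suc_shift del: prod.lessThan_Suc)
  finally show ?case .
qed

lemma sum_lists_length_prod_prefix:
  fixes h p :: "'a \<Rightarrow> 'b::comm_semiring_1"
  assumes "(\<Sum>d\<in>D. p d) = 1" and "k \<le> n"
  shows "(\<Sum>ds\<in>{ds. length ds = n \<and> set ds \<subseteq> D}. (\<Prod>j<k. h (ds ! j)) * (\<Prod>j<n. p (ds ! j)))
    = (\<Sum>d\<in>D. h d * p d) ^ k"
proof -
  define g where "g j d = (if j < k then h d else 1) * p d" for j d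
  have prefix: "(\<Prod>j<k. f j) = (\<Prod>j<n. if j < k then f j else 1)" for f :: "nat \<Rightarrow> 'b"
    using \<open>k \<le> n\<close> by (simp add: prod.If_cases Int_absorb1 lessThan_subset_iff flip: lessThan_def)
  have "(\<Prod>j<k. h (ds ! j)) * (\<Prod>j<n. p (ds ! j)) = (\<Prod>j<n. g j (ds ! j))" for ds
    unfolding g_def prefix[of "\<lambda>j. h (ds ! j)"] by (simp add: prod.distrib)
  then have "(\<Sum>ds\<in>{ds. length ds = n \<and> set ds \<subseteq> D}. (\<Prod>j<k. h (ds ! j)) * (\<Prod>j<n. p (ds ! j)))
      = (\<Prod>j<n. \<Sum>d\<in>D. g j d)"
    by (simp add: sum_lists_length_prod_nth)
  also have "\<dots> = (\<Prod>j<n. if j < k then (\<Sum>d\<in>D. h d * p d) else 1)"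
    by (intro prod.cong) (simp_all add: g_def assms(1))
  also have "\<dots> = (\<Sum>d\<in>D. h d * p d) ^ k"
    by (simp flip: prefix)
  finally show ?thesis .
qed

lemma centered_exp_moment_le:
  fixes p :: "int \<Rightarrow> real" and M :: nat
  assumes p_nonneg: "\<And>d. d \<in> {- int M..int M} \<Longrightarrow> 0 \<le> p d"
    and p_sum: "(\<Sum>d\<in>{- int M..int M}. p d) = 1"
    and V: "V = (\<Sum>d\<in>{- int M..int M}. real_of_int d * p d)"
    and "0 \<le> \<theta>" and "\<theta> * (2 * real M) \<le> 1"
  shows "(\<Sum>d\<in>{- int M..int M}. exp (\<theta> * (real_of_int d - V)) * p d) \<le> exp (4 * real M ^ 2 * \<theta> ^ 2)"
proof -
  let ?D = "{- int M..int M}"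
  have "\<bar>V\<bar> \<le> (\<Sum>d\<in>?D. \<bar>real_of_int d * p d\<bar>)" unfolding V by (rule sum_abs)
  also have "\<dots> \<le> (\<Sum>d\<in>?D. real M * p d)"
    by (intro sum_mono) (auto simp: abs_mult p_nonneg intro!: mult_right_mono)
  also have "\<dots> = real M" by (simp add: p_sum flip: sum_distrib_left)
  finally have "\<bar>V\<bar> \<le> real M" .
  then have x_bound: "\<bar>\<theta> * (real_of_int d - V)\<bar> \<le> \<theta> * (2 * real M)" if "d \<in> ?D" for d
    using that \<open>0 \<le> \<theta>\<close> by (auto simp: abs_mult intro!: mult_left_mono)
  have "(\<Sum>d\<in>?D. exp (\<theta> * (real_of_int d - V)) * p d)
      \<le> (\<Sum>d\<in>?D. (1 + \<theta> * (real_of_int d - V) + (\<theta> * (real_of_int d - V))\<^sup>2) * p d)"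
    using x_bound assms(5)
    by (intro sum_mono mult_right_mono exp_le_one_plus_self_plus_square p_nonneg)
       (auto dest!: abs_le_D1 intro: order_trans)
  also have "\<dots> \<le> (\<Sum>d\<in>?D. (1 + \<theta> * (real_of_int d - V) + (\<theta> * (2 * real M))\<^sup>2) * p d)"
    using x_bound
    by (intro sum_mono mult_right_mono p_nonneg add_left_mono)
       (auto simp flip: abs_le_square_iff intro: order_trans[OF _ abs_ge_self])
  also have "\<dots> = (\<Sum>d\<in>?D. p d) + \<theta> * ((\<Sum>d\<in>?D. real_of_int d * p d) - V * (\<Sum>d\<in>?D. p d))
      + (\<theta> * (2 * real M))\<^sup>2 * (\<Sum>d\<in>?D. p d)"
    by (simp add: algebra_simps sum.distrib sum_distrib_left sum_subtractf)
  also have "\<dots> = 1 + 4 * real M ^ 2 * \<theta> ^ 2"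
    using p_sum V by (simp add: power_mult_distrib)
  also have "\<dots> \<le> exp (4 * real M ^ 2 * \<theta> ^ 2)"
    by (rule exp_ge_add_one_self)
  finally show ?thesis .
qed

definition step_lists :: "nat \<Rightarrow> nat \<Rightarrow> int list set" where
  "step_lists M n = {ds. length ds = n \<and> set ds \<subseteq> {- int M..int M}}"

lemma finite_step_lists: "finite (step_lists M n)"
  unfolding step_lists_def
  using finite_lists_length_eq[OF finite_atLeastAtMost_int, of "- int M" "int M" n]
  by (simp add: conj_commute)

lemma sum_step_lists_exp_partial_sum_le:
  fixes p :: "int \<Rightarrow> real" and M :: nat
  assumes p_nonneg: "\<And>d. d \<in> {- int M..int M} \<Longrightarrow> 0 \<le> p d"
    and p_sum: "(\<Sum>d\<in>{- int M..int M}. p d) = 1"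
    and V: "V = (\<Sum>d\<in>{- int M..int M}. real_of_int d * p d)"
    and \<theta>: "0 \<le> \<theta>" "\<theta> * (2 * real M) \<le> 1"
    and "k \<le> n"
  shows "(\<Sum>ds\<in>step_lists M n.
            exp (\<theta> * (real_of_int (sum_list (take k ds)) - V * real k - a)) * (\<Prod>j<n. p (ds ! j)))
         \<le> exp (4 * real M ^ 2 * \<theta> ^ 2 * real n - \<theta> * a)"
proof -
  let ?\<phi> = "\<Sum>d\<in>{- int M..int M}. exp (\<theta> * (real_of_int d - V)) * p d"
  have factor: "exp (\<theta> * (real_of_int (sum_list (take k ds)) - V * real k - a))
      = exp (- \<theta> * a) * (\<Prod>j<k. exp (\<theta> * (real_of_int (ds ! j) - V)))" if "ds \<in> step_lists M n" for ds
  proof -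
    have "sum_list (take k ds) = (\<Sum>j<k. ds ! j)"
      using that \<open>k \<le> n\<close> by (simp add: step_lists_def sum_list_sum_nth atLeast0LessThan min_absorb2)
    then have "\<theta> * (real_of_int (sum_list (take k ds)) - V * real k - a)
        = - \<theta> * a + (\<Sum>j<k. \<theta> * (real_of_int (ds ! j) - V))"
      by (simp add: algebra_simps sum_subtractf sum_distrib_left)
    then show ?thesis by (simp only: exp_add exp_sum[OF finite_lessThan])
  qed
  have "(\<Sum>ds\<in>step_lists M n.
            exp (\<theta> * (real_of_int (sum_list (take k ds)) - V * real k - a)) * (\<Prod>j<n. p (ds ! j)))
      = exp (- \<theta> * a) * ?\<phi> ^ k"
    using sum_lists_length_prod_prefix[OF p_sum \<open>k \<le> n\<close>, of "\<lambda>d. exp (\<theta> * (real_of_int d - V))"]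
    by (simp add: factor mult.assoc step_lists_def flip: sum_distrib_left)
  also have "\<dots> \<le> exp (- \<theta> * a) * exp (4 * real M ^ 2 * \<theta> ^ 2) ^ k"
    using centered_exp_moment_le[OF p_nonneg p_sum V \<theta>]
    by (intro mult_left_mono power_mono sum_nonneg mult_nonneg_nonneg p_nonneg) auto
  also have "\<dots> \<le> exp (- \<theta> * a) * exp (4 * real M ^ 2 * \<theta> ^ 2 * real n)"
    using \<open>k \<le> n\<close> by (simp add: mult.commute exp_of_nat_mult[symmetric] mult_right_mono)
  also have "\<dots> = exp (4 * real M ^ 2 * \<theta> ^ 2 * real n - \<theta> * a)"
    by (simp add: exp_add[symmetric])
  finally show ?thesis .
qed

definition path_weight :: "(int \<times> int \<Rightarrow> int \<Rightarrow> real) \<Rightarrow> int \<Rightarrow> int \<Rightarrow> int list \<Rightarrow> real" where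
  "path_weight \<omega> i \<tau> ds = (\<Prod>k<length ds. \<omega> (walk_pos i ds k, \<tau> - int k) (ds ! k))"

definition quenched_expectation ::
  "nat \<Rightarrow> (int \<times> int \<Rightarrow> int \<Rightarrow> real) \<Rightarrow> int \<Rightarrow> int \<Rightarrow> nat \<Rightarrow> ((nat \<Rightarrow> int) \<Rightarrow> real) \<Rightarrow> real" where
  "quenched_expectation M \<omega> i \<tau> n f = (\<Sum>ds\<in>step_lists M n. f (walk_pos i ds) * path_weight \<omega> i \<tau> ds)"

definition mean_kernel :: "(int \<Rightarrow> real) measure \<Rightarrow> int \<Rightarrow> real" where
  "mean_kernel \<mu> d = (\<integral>u. u d \<partial>\<mu>)"

definition annealed_expectation ::
  "nat \<Rightarrow> (int \<Rightarrow> real) measure \<Rightarrow> int \<Rightarrow> nat \<Rightarrow> ((nat \<Rightarrow> int) \<Rightarrow> real) \<Rightarrow> real" where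
  "annealed_expectation M \<mu> i n f = (\<Sum>ds\<in>step_lists M n. f (walk_pos i ds) * (\<Prod>j<n. mean_kernel \<mu> (ds ! j)))"

lemma path_weight_nonneg: "(\<And>z y. 0 \<le> \<omega> z y) \<Longrightarrow> 0 \<le> path_weight \<omega> i \<tau> ds"
  unfolding path_weight_def by (intro prod_nonneg) auto

lemma quenched_prob_nonneg: "(\<And>z y. 0 \<le> \<omega> z y) \<Longrightarrow> 0 \<le> quenched_prob M \<omega> i \<tau> n E"
  unfolding quenched_prob_def by (intro sum_nonneg) (auto intro: prod_nonneg)

lemma quenched_prob_le_quenched_expectation:
  assumes "\<And>z y. 0 \<le> \<omega> z y" and "\<And>X. E X \<Longrightarrow> 1 \<le> f X" and "\<And>X. 0 \<le> f X"
  shows "quenched_prob M \<omega> i \<tau> n E \<le> quenched_expectation M \<omega> i \<tau> n f"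
  unfolding quenched_prob_def quenched_expectation_def step_lists_def
proof (intro sum_mono)
  fix ds assume "ds \<in> {ds. length ds = n \<and> set ds \<subseteq> {- int M..int M}}"
  then have weight: "(\<Prod>k<n. \<omega> (walk_pos i ds k, \<tau> - int k) (ds ! k)) = path_weight \<omega> i \<tau> ds"
    by (simp add: path_weight_def)
  show "(if E (walk_pos i ds) then \<Prod>k<n. \<omega> (walk_pos i ds k, \<tau> - int k) (ds ! k) else 0)
      \<le> f (walk_pos i ds) * path_weight \<omega> i \<tau> ds"
    unfolding weight
    using mult_right_mono[OF assms(2) path_weight_nonneg[OF assms(1)]] assms(3)
      mult_nonneg_nonneg[OF assms(3) path_weight_nonneg[OF assms(1)]]
    by auto
qed

definition exp_tilt :: "real \<Rightarrow> real \<Rightarrow> real \<Rightarrow> int \<Rightarrow> nat \<Rightarrow> (nat \<Rightarrow> int) \<Rightarrow> real" where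
  "exp_tilt V \<theta> a i n X = (\<Sum>k\<in>{1..n}. exp (\<theta> * (real_of_int (X k - i) - V * real k - a)))"

lemma exp_tilt_nonneg: "0 \<le> exp_tilt V \<theta> a i n X"
  unfolding exp_tilt_def by (simp add: sum_nonneg)

lemma quenched_prob_deviation_le:
  assumes "\<And>z y. 0 \<le> \<omega> z y" and "0 \<le> \<theta>"
  shows "quenched_prob M \<omega> i \<tau> n (\<lambda>X. \<exists>k\<in>{1..n}. real_of_int (X k - i) - V * real k \<ge> a)
    \<le> quenched_expectation M \<omega> i \<tau> n (exp_tilt V \<theta> a i n)"
proof (rule quenched_prob_le_quenched_expectation[OF assms(1)])
  fix X assume "\<exists>k\<in>{1..n}. real_of_int (X k - i) - V * real k \<ge> a"
  then obtain k where k: "k \<in> {1..n}" "real_of_int (X k - i) - V * real k \<ge> a" by blast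
  then have "1 \<le> exp (\<theta> * (real_of_int (X k - i) - V * real k - a))"
    using assms(2) by simp
  also have "\<dots> \<le> exp_tilt V \<theta> a i n X"
    unfolding exp_tilt_def using k by (intro member_le_sum) auto
  finally show "1 \<le> exp_tilt V \<theta> a i n X" .
qed (rule exp_tilt_nonneg)

locale site_law = prob_space \<mu> for \<mu> :: "(int \<Rightarrow> real) measure" +
  fixes M :: nat
  assumes sets_site_law: "sets \<mu> = sets vec_space"
    and AE_Pvec: "AE u in \<mu>. u \<in> Pvec M"
begin

lemma measurable_coordinate [measurable]: "(\<lambda>u. u d) \<in> borel_measurable \<mu>"
  using measurable_component_singleton[of d UNIV "\<lambda>_. borel"]
  by (simp add: measurable_cong_sets[OF sets_site_law refl] vec_space_def)

lemma measurable_env_coordinate [measurable]: "(\<lambda>\<omega>. \<omega> z d) \<in> borel_measurable (env_measure \<mu>)"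
  unfolding env_measure_def
  by (rule measurable_compose[OF measurable_component_singleton[where M="\<lambda>_. \<mu>"] measurable_coordinate]) simp

lemma AE_env_Pvec: "AE \<omega> in env_measure \<mu>. \<forall>z. \<omega> z \<in> Pvec M"
  unfolding env_measure_def AE_all_countable
  using AE_PiM_component[of UNIV "\<lambda>_. \<mu>", OF _ _ AE_Pvec] prob_space_axioms by auto

lemma AE_env_nonneg: "AE \<omega> in env_measure \<mu>. \<forall>z y. 0 \<le> \<omega> z y"
  using AE_env_Pvec by eventually_elim (simp add: Pvec_def)

lemma AE_coordinate_bounds: "AE u in \<mu>. 0 \<le> u d \<and> u d \<le> 1"
  using AE_Pvec
proof eventually_elim
  case (elim u)
  then have "u d \<le> (\<Sum>y\<in>{- int M..int M}. u y)" if "d \<in> {- int M..int M}"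
    using that by (intro member_le_sum) (auto simp: Pvec_def)
  with elim show ?case by (cases "d \<in> {- int M..int M}") (auto simp: Pvec_def)
qed

lemma integrable_coordinate: "integrable \<mu> (\<lambda>u. u d)"
proof (rule integrable_const_bound[where B=1])
  show "AE u in \<mu>. norm (u d) \<le> 1"
    using AE_coordinate_bounds[of d] by eventually_elim auto
qed simp

lemma mean_kernel_nonneg: "0 \<le> mean_kernel \<mu> d"
  unfolding mean_kernel_def by (rule integral_nonneg_AE) (use AE_coordinate_bounds in auto)

lemma nn_integral_coordinate: "(\<integral>\<^sup>+u. ennreal (u d) \<partial>\<mu>) = ennreal (mean_kernel \<mu> d)"
  unfolding mean_kernel_def
  by (rule nn_integral_eq_integral[OF integrable_coordinate]) (use AE_coordinate_bounds in auto)

lemma sum_mean_kernel: "(\<Sum>d\<in>{- int M..int M}. mean_kernel \<mu> d) = 1"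
proof -
  have "(\<Sum>d\<in>{- int M..int M}. mean_kernel \<mu> d) = (\<integral>u. (\<Sum>d\<in>{- int M..int M}. u d) \<partial>\<mu>)"
    unfolding mean_kernel_def by (simp add: integrable_coordinate)
  also have "\<dots> = (\<integral>u. 1 \<partial>\<mu>)"
    by (rule integral_cong_AE) (use AE_Pvec in \<open>auto simp: Pvec_def\<close>)
  finally show ?thesis by (simp add: prob_space)
qed

lemma measurable_quenched_expectation:
  "(\<lambda>\<omega>. quenched_expectation M \<omega> i \<tau> n f) \<in> borel_measurable (env_measure \<mu>)"
  unfolding quenched_expectation_def path_weight_def by measurable

text \<open>Along a path the sites (walk_pos i ds k, \<tau> - k) have distinct time coordinates, so the
  quenched weights are independent and average to the homogeneous kernel.\<close>
lemma nn_integral_quenched_expectation: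
  assumes "\<And>X. 0 \<le> f X"
  shows "(\<integral>\<^sup>+\<omega>. ennreal (quenched_expectation M \<omega> i \<tau> n f) \<partial>env_measure \<mu>)
    = ennreal (annealed_expectation M \<mu> i n f)"
proof -
  define \<sigma> where "\<sigma> ds k = (walk_pos i ds k, \<tau> - int k)" for ds k
  have inj: "inj_on (\<sigma> ds) {..<n}" for ds by (auto simp: inj_on_def \<sigma>_def)
  have "AE \<omega> in env_measure \<mu>. ennreal (quenched_expectation M \<omega> i \<tau> n f)
      = (\<Sum>ds\<in>step_lists M n. ennreal (f (walk_pos i ds)) * (\<Prod>k<n. ennreal (\<omega> (\<sigma> ds k) (ds ! k))))"
    using AE_env_nonneg
  proof eventually_elim
    case (elim \<omega>)
    then have \<omega>_nonneg: "0 \<le> \<omega> z y" for z y by blast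
    have "ennreal (quenched_expectation M \<omega> i \<tau> n f)
        = (\<Sum>ds\<in>step_lists M n. ennreal (f (walk_pos i ds)) * ennreal (path_weight \<omega> i \<tau> ds))"
      unfolding quenched_expectation_def
      by (subst sum_ennreal[symmetric])
         (simp_all add: ennreal_mult assms path_weight_nonneg \<omega>_nonneg)
    also have "\<dots> = (\<Sum>ds\<in>step_lists M n. ennreal (f (walk_pos i ds)) * (\<Prod>k<n. ennreal (\<omega> (\<sigma> ds k) (ds ! k))))"
      by (intro sum.cong refl arg_cong2[where f="(*)"])
         (simp add: path_weight_def step_lists_def \<sigma>_def prod_ennreal \<omega>_nonneg)
    finally show ?case .
  qed
  then have "(\<integral>\<^sup>+\<omega>. ennreal (quenched_expectation M \<omega> i \<tau> n f) \<partial>env_measure \<mu>)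
      = (\<Sum>ds\<in>step_lists M n. ennreal (f (walk_pos i ds))
          * (\<integral>\<^sup>+\<omega>. (\<Prod>k<n. ennreal (\<omega> (\<sigma> ds k) (ds ! k))) \<partial>env_measure \<mu>))"
    by (simp add: nn_integral_cong_AE nn_integral_sum nn_integral_cmult)
  also have "\<dots> = (\<Sum>ds\<in>step_lists M n. ennreal (f (walk_pos i ds)) * (\<Prod>k<n. ennreal (mean_kernel \<mu> (ds ! k))))"
  proof (intro sum.cong refl arg_cong2[where f="(*)"])
    fix ds
    show "(\<integral>\<^sup>+\<omega>. (\<Prod>k<n. ennreal (\<omega> (\<sigma> ds k) (ds ! k))) \<partial>env_measure \<mu>)
        = (\<Prod>k<n. ennreal (mean_kernel \<mu> (ds ! k)))"
      unfolding env_measure_def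
      by (subst nn_integral_PiM_prod_inj_coordinates[OF prob_space_axioms finite_lessThan inj,
            where f="\<lambda>k u. ennreal (u (ds ! k))"]) (simp_all add: nn_integral_coordinate)
  qed
  also have "\<dots> = ennreal (annealed_expectation M \<mu> i n f)"
    unfolding annealed_expectation_def
    by (subst sum_ennreal[symmetric])
       (simp_all add: assms mean_kernel_nonneg prod_ennreal ennreal_mult prod_nonneg)
  finally show ?thesis .
qed

lemma annealed_expectation_nonneg:
  "(\<And>X. 0 \<le> f X) \<Longrightarrow> 0 \<le> annealed_expectation M \<mu> i n f"
  unfolding annealed_expectation_def
  by (intro sum_nonneg mult_nonneg_nonneg prod_nonneg mean_kernel_nonneg) auto

lemma annealed_expectation_exp_tilt_le:
  assumes "0 \<le> \<theta>" and "\<theta> * (2 * real M) \<le> 1"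
  shows "annealed_expectation M \<mu> i n (exp_tilt (drift M \<mu>) \<theta> a i n)
    \<le> real n * exp (4 * real M ^ 2 * \<theta> ^ 2 * real n - \<theta> * a)"
proof -
  have "annealed_expectation M \<mu> i n (exp_tilt (drift M \<mu>) \<theta> a i n)
      = (\<Sum>k\<in>{1..n}. \<Sum>ds\<in>step_lists M n.
          exp (\<theta> * (real_of_int (sum_list (take k ds)) - drift M \<mu> * real k - a)) * (\<Prod>j<n. mean_kernel \<mu> (ds ! j)))"
    unfolding annealed_expectation_def exp_tilt_def walk_pos_def
    by (subst sum.swap) (simp add: sum_distrib_right)
  also have "\<dots> \<le> (\<Sum>k\<in>{1..n}. exp (4 * real M ^ 2 * \<theta> ^ 2 * real n - \<theta> * a))"
    by (intro sum_mono sum_step_lists_exp_partial_sum_le)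
       (auto simp: mean_kernel_nonneg sum_mean_kernel drift_def assms simp flip: mean_kernel_def)
  finally show ?thesis by simp
qed

lemma annealed_expectation_exp_tilt_tail_le:
  fixes s :: nat
  assumes "0 < s" and "16 * M\<^sup>2 \<le> s"
  shows "annealed_expectation M \<mu> i s (exp_tilt (drift M \<mu>) (2 / sqrt (real s)) (c * real s powr (1/2 + \<gamma>)) i s)
    \<le> real s * exp (16 * real M ^ 2 - 2 * c * real s powr \<gamma>)"
proof -
  have "sqrt (16 * real M ^ 2) \<le> sqrt (real s)"
    using assms(2) by (subst real_sqrt_le_iff) (metis of_nat_le_iff of_nat_mult of_nat_numeral of_nat_power)
  then have "2 / sqrt (real s) * (2 * real M) \<le> 1"
    using assms(1) by (simp add: real_sqrt_mult field_simps)
  moreover have "4 * real M ^ 2 * (2 / sqrt (real s)) ^ 2 * real s - 2 / sqrt (real s) * (c * real s powr (1/2 + \<gamma>))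
      = 16 * real M ^ 2 - 2 * c * real s powr \<gamma>"
    using assms(1) by (simp add: power_divide powr_add powr_half_sqrt)
  ultimately show ?thesis
    using annealed_expectation_exp_tilt_le[of "2 / sqrt (real s)" i s "c * real s powr (1/2 + \<gamma>)"]
    by simp
qed

lemma eventually_annealed_expectation_exp_tilt_tail_le:
  fixes s :: "nat \<Rightarrow> nat"
  assumes "filterlim s at_top sequentially" and "\<And>n. 0 < s n"
  shows "eventually (\<lambda>n. \<forall>i. annealed_expectation M \<mu> i (s n)
      (exp_tilt (drift M \<mu>) (2 / sqrt (real (s n))) (c * real (s n) powr (1/2 + \<gamma>)) i (s n))
    \<le> real (s n) * exp (16 * real M ^ 2 - 2 * c * real (s n) powr \<gamma>)) sequentially"
proof -
  have "eventually (\<lambda>n. 16 * M\<^sup>2 \<le> s n) sequentially"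
    using assms(1) by (simp add: filterlim_at_top)
  then show ?thesis
    by eventually_elim (simp add: annealed_expectation_exp_tilt_tail_le assms(2))
qed

end

theorem lemma4p3:
  fixes M :: nat and \<mu> :: "(int \<Rightarrow> real) measure"
    and i \<tau> :: "nat \<Rightarrow> nat \<Rightarrow> int" and v s :: "nat \<Rightarrow> nat"
    and \<alpha> \<gamma> c :: real
  assumes "M \<ge> 1"
    and "prob_space \<mu>" and "sets \<mu> = sets vec_space"
    and "AE u in \<mu>. u \<in> Pvec M"
    and "\<And>n. v n \<ge> 1" and "\<And>n. s n > 0"
    and "filterlim s at_top sequentially"
    and "\<alpha> > 0" and "\<gamma> > 0" and "c > 0"
    and "summable (\<lambda>n. real (v n) * real (s n) powr \<alpha> * exp (- c * real (s n) powr \<gamma>))"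
  shows "AE \<omega> in env_measure \<mu>.
    (\<lambda>n. Max ((\<lambda>m. real (s n) powr \<alpha> *
        quenched_prob M \<omega> (i m n) (\<tau> m n) (s n)
          (\<lambda>X. \<exists>k\<in>{1..s n}. real_of_int (X k - i m n) - drift M \<mu> * real k
                 \<ge> c * real (s n) powr (1/2 + \<gamma>))) ` {1..v n}))
    \<longlonglongrightarrow> 0"
proof -
  interpret site_law \<mu> M
    using assms(2-4) by (simp add: site_law_def site_law_axioms_def)
  define tilt where "tilt n m = exp_tilt (drift M \<mu>) (2 / sqrt (real (s n)))
    (c * real (s n) powr (1/2 + \<gamma>)) (i m n) (s n)" for n m
  define F where "F n m \<omega> = real (s n) powr \<alpha> * quenched_prob M \<omega> (i m n) (\<tau> m n) (s n)
    (\<lambda>X. \<exists>k\<in>{1..s n}. real_of_int (X k - i m n) - drift M \<mu> * real k \<ge> c * real (s n) powr (1/2 + \<gamma>))"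
    for n m \<omega>
  define G where "G n m \<omega> = real (s n) powr \<alpha> * quenched_expectation M \<omega> (i m n) (\<tau> m n) (s n) (tilt n m)"
    for n m \<omega>
  define b where "b n m = real (s n) powr \<alpha> * annealed_expectation M \<mu> (i m n) (s n) (tilt n m)" for n m
  have "eventually (\<lambda>n. (\<Sum>m\<in>{1..v n}. b n m)
      \<le> real (v n) * real (s n) powr \<alpha> * (real (s n) * exp (16 * real M ^ 2 - 2 * c * real (s n) powr \<gamma>))) sequentially"
    using eventually_annealed_expectation_exp_tilt_tail_le[OF assms(7,6), of c \<gamma>]
  proof eventually_elim
    case (elim n)
    then have "b n m \<le> real (s n) powr \<alpha> * (real (s n) * exp (16 * real M ^ 2 - 2 * c * real (s n) powr \<gamma>))" for m
      unfolding b_def tilt_def by (intro mult_left_mono) auto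
    then have "(\<Sum>m\<in>{1..v n}. b n m)
        \<le> real (card {1..v n}) * (real (s n) powr \<alpha> * (real (s n) * exp (16 * real M ^ 2 - 2 * c * real (s n) powr \<gamma>)))"
      by (intro sum_bounded_above)
    then show ?case by (simp add: mult.assoc)
  qed
  have "AE \<omega> in env_measure \<mu>. (\<lambda>n. Max ((\<lambda>m. F n m \<omega>) ` {1..v n})) \<longlonglongrightarrow> 0"
  proof (rule AE_Max_tendsto_zero_if_summable_nn_integral[where G = G and b = b])
    show "AE \<omega> in env_measure \<mu>. \<forall>n m. 0 \<le> F n m \<omega> \<and> F n m \<omega> \<le> G n m \<omega>"
      using AE_env_nonneg
    proof eventually_elim
      case (elim \<omega>)
      then have nonneg: "\<And>z y. 0 \<le> \<omega> z y" by blast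
      show ?case
        unfolding F_def G_def tilt_def
        by (intro allI conjI mult_nonneg_nonneg mult_left_mono quenched_prob_nonneg
            quenched_prob_deviation_le nonneg) simp_all
    qed
    show "G n m \<in> borel_measurable (env_measure \<mu>)" for n m
      unfolding G_def[abs_def]
      by (rule borel_measurable_times[OF borel_measurable_const measurable_quenched_expectation])
    show "(\<integral>\<^sup>+\<omega>. G n m \<omega> \<partial>env_measure \<mu>) \<le> ennreal (b n m)" for n m
      unfolding G_def b_def tilt_def
      by (simp add: ennreal_mult' nn_integral_quenched_expectation exp_tilt_nonneg
          nn_integral_cmult[OF measurable_compose[OF measurable_quenched_expectation measurable_ennreal]])
    show "summable (\<lambda>n. \<Sum>m\<in>{1..v n}. b n m)"
      using assms(7,10,9,11) _ _ \<open>eventually _ sequentially\<close>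
      by (rule summable_if_eventually_le_stretched_exp)
         (simp_all add: b_def sum_nonneg annealed_expectation_nonneg tilt_def exp_tilt_nonneg)
  qed (use assms(5) in \<open>simp_all add: b_def annealed_expectation_nonneg tilt_def exp_tilt_nonneg\<close>)
  then show ?thesis
    unfolding F_def .
qed

end
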